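(* Let $u,v\in\mathbb{Z}_2^n$ with $d=d_{\mathcal H}(u,v)\le2\varepsilon$ and $\varepsilon/n<1/2$. Then $$\mathcal{I}^\varepsilon_d\le 2^{n\left(h\left(\frac{\varepsilon-\lceil d/2\rceil}{n}\right)-1\right)+d}\le 2^{n(h(\varepsilon/n)-1)+d}\left(\frac{\varepsilon/n}{1-\varepsilon/n}\right)^{\lceil d/2\rceil}.$$
   Context: $d_{\mathcal H}$ is the Hamming distance, $B_\varepsilon(t)=\{y:d_{\mathcal H}(t,y)\le\varepsilon\}$, and $\mathcal{I}^\varepsilon_d=|B_\varepsilon(u)\cap B_\varepsilon(v)|/2^n=\frac{1}{2^n}\sum_{k=\max(0,d-\varepsilon)}^{\min(\varepsilon,d)}\sum_{i=0}^{\min(\varepsilon-k,\varepsilon-d+k)}\binom dk\binom{n-d}{i}$. $h(x)=-x\log_2x-(1-x)\log_2(1-x)$ is the binary entropy function (with $h(0)=0$). *)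

theory Defs
  imports Complex_Main
begin

text \<open>Vectors of Z_2^n are represented as boolean lists of length n.\<close>

definition hamming_dist :: "bool list \<Rightarrow> bool list \<Rightarrow> nat" where
  "hamming_dist x y = card {i. i < length x \<and> x ! i \<noteq> y ! i}"

definition hcube :: "nat \<Rightarrow> bool list set" where
  "hcube n = {x. length x = n}"

definition hball :: "nat \<Rightarrow> nat \<Rightarrow> bool list \<Rightarrow> bool list set" where
  "hball n eps t = {y \<in> hcube n. hamming_dist t y \<le> eps}"

definition ball_inter :: "nat \<Rightarrow> nat \<Rightarrow> bool list \<Rightarrow> bool list \<Rightarrow> real" where
  "ball_inter n eps u v = real (card (hball n eps u \<inter> hball n eps v)) / 2 ^ n"

definition bin_entropy :: "real \<Rightarrow> real" where
  "bin_entropy x = (if x = 0 \<or> x = 1 then 0 else - x * log 2 x - (1 - x) * log 2 (1 - x))"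

end

theory Submission
  imports Defs
begin

text \<open>A point y of both balls is determined by the set of positions where it differs from u.
  Split this set along the support D of u + v (so |D| = d): the part inside D is one of 2^d
  subsets, while the part outside D has at most m = \<epsilon> - \<lceil>d/2\<rceil> elements, because y is
  within \<epsilon> of both u and v.  The number of subsets of {..<n} of size at most m is a binomial
  tail, at most 2^(n h(m/n)) for m \<le> n/2.  The second inequality is the tangent line bound
  for the concave function h at \<epsilon>/n, whose slope there is log ((1 - \<epsilon>/n) / (\<epsilon>/n)).\<close>

text \<open>This holds also at 0 and 1 because Isabelle's log 2 0 is 0.\<close>
lemma bin_entropy_altdef: "bin_entropy x = - x * log 2 x - (1 - x) * log 2 (1 - x)"
  by (auto simp: bin_entropy_def)

lemma mult_ln_ratio_le:
  fixes p q :: real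
  assumes "0 \<le> q" "0 < p"
  shows "q * (ln p - ln q) \<le> p - q"
proof (cases "q = 0")
  case True
  then show ?thesis using assms by simp
next
  case False
  then have "0 < q" using assms by simp
  have "q * (ln p - ln q) = q * ln (p / q)" using \<open>0 < q\<close> assms by (simp add: ln_div)
  also have "\<dots> \<le> q * (p / q - 1)"
    using \<open>0 < q\<close> assms by (intro mult_left_mono ln_le_minus_one) auto
  also have "\<dots> = p - q" using \<open>0 < q\<close> by (simp add: field_simps)
  finally show ?thesis .
qed

lemma bin_entropy_le_cross_entropy:
  fixes p q :: real
  assumes "0 \<le> q" "q \<le> 1" "0 < p" "p < 1"
  shows "bin_entropy q \<le> - q * log 2 p - (1 - q) * log 2 (1 - p)"
proof -
  have "q * (ln p - ln q) + (1 - q) * (ln (1 - p) - ln (1 - q)) \<le> 0"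
    using mult_ln_ratio_le[of q p] mult_ln_ratio_le[of "1 - q" "1 - p"] assms by simp
  then have "(- q * ln q - (1 - q) * ln (1 - q)) / ln 2 \<le> (- q * ln p - (1 - q) * ln (1 - p)) / ln 2"
    by (intro divide_right_mono) (auto simp: algebra_simps)
  then show ?thesis
    unfolding bin_entropy_altdef log_def by (simp add: diff_divide_distrib)
qed

lemma bin_entropy_le_tangent:
  fixes p q :: real
  assumes "0 \<le> q" "q \<le> 1" "0 < p" "p < 1"
  shows "bin_entropy q \<le> bin_entropy p + (p - q) * log 2 (p / (1 - p))"
proof -
  have log_ratio: "log 2 (p / (1 - p)) = log 2 p - log 2 (1 - p)"
    using assms by (simp add: log_divide)
  have "bin_entropy p + (p - q) * log 2 (p / (1 - p)) = - q * log 2 p - (1 - q) * log 2 (1 - p)"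
    unfolding log_ratio bin_entropy_altdef[of p] by (simp add: algebra_simps)
  then show ?thesis using bin_entropy_le_cross_entropy[OF assms] by simp
qed

lemma power_eq_powr_log:
  fixes x :: real
  assumes "0 < x"
  shows "x ^ k = 2 powr (real k * log 2 x)"
proof -
  have "2 powr (real k * log 2 x) = (2 powr log 2 x) powr real k"
    by (simp add: powr_powr mult.commute)
  also have "\<dots> = x ^ k" using assms by (simp add: powr_realpow)
  finally show ?thesis by simp
qed

lemma powr_entropy_shift_le:
  fixes n e c :: nat
  assumes "c \<le> e" "0 < n" "real e / real n < 1 / 2"
  shows "2 powr (real n * bin_entropy ((real e - real c) / real n))
         \<le> 2 powr (real n * bin_entropy (real e / real n))
           * ((real e / real n) / (1 - real e / real n)) ^ c"
proof (cases "e = 0")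
  case True
  then show ?thesis using assms by simp
next
  case False
  define p where "p = real e / real n"
  have p: "0 < p" "p < 1" using False assms by (auto simp: p_def)
  have q: "(real e - real c) / real n = p - real c / real n"
    by (simp add: p_def diff_divide_distrib)
  have "0 \<le> p - real c / real n" "p - real c / real n \<le> 1"
    using assms p by (auto simp: p_def field_simps)
  then have "bin_entropy (p - real c / real n) \<le> bin_entropy p + real c / real n * log 2 (p / (1 - p))"
    using bin_entropy_le_tangent[of "p - real c / real n" p] p by simp
  then have "real n * bin_entropy (p - real c / real n)
             \<le> real n * bin_entropy p + real c * log 2 (p / (1 - p))"
    using assms(2) by (simp add: field_simps mult_left_mono)
  then show ?thesis
    using power_eq_powr_log[of "p / (1 - p)" c] p unfolding q p_def[symmetric]
    by (simp add: powr_add[symmetric])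
qed

lemma sum_binomial_mult_le_one:
  fixes p :: real
  assumes "0 \<le> p" "p \<le> 1 - p" "m \<le> n"
  shows "real (\<Sum>i\<le>m. n choose i) * (p ^ m * (1 - p) ^ (n - m)) \<le> 1"
proof -
  have weight_mono: "p ^ m * (1 - p) ^ (n - m) \<le> p ^ i * (1 - p) ^ (n - i)" if "i \<le> m" for i
  proof -
    have "p ^ m * (1 - p) ^ (n - m) = p ^ i * p ^ (m - i) * (1 - p) ^ (n - m)"
      using that by (simp add: power_add[symmetric])
    also have "\<dots> \<le> p ^ i * (1 - p) ^ (m - i) * (1 - p) ^ (n - m)"
      using assms by (intro mult_right_mono mult_left_mono power_mono) auto
    also have "\<dots> = p ^ i * (1 - p) ^ (n - i)"
      using that assms(3) by (simp add: mult.assoc power_add[symmetric])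
    finally show ?thesis .
  qed
  have "real (\<Sum>i\<le>m. n choose i) * (p ^ m * (1 - p) ^ (n - m))
        \<le> (\<Sum>i\<le>m. real (n choose i) * (p ^ i * (1 - p) ^ (n - i)))"
    unfolding of_nat_sum sum_distrib_right using weight_mono by (intro sum_mono mult_left_mono) auto
  also have "\<dots> \<le> (\<Sum>i\<le>n. real (n choose i) * (p ^ i * (1 - p) ^ (n - i)))"
    using assms by (intro sum_mono2) auto
  also have "\<dots> = (p + (1 - p)) ^ n"
    unfolding binomial_ring by (simp add: mult.assoc)
  finally show ?thesis by simp
qed

lemma binomial_weight_eq_entropy:
  fixes m n :: nat
  assumes "0 < m" "m < n"
  shows "(real m / real n) ^ m * (1 - real m / real n) ^ (n - m)
         = 2 powr (- (real n * bin_entropy (real m / real n)))"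
proof -
  define p where "p = real m / real n"
  have p: "0 < p" "p < 1" using assms by (auto simp: p_def)
  have "real m = real n * p" "real (n - m) = real n * (1 - p)"
    using assms by (auto simp: p_def field_simps of_nat_diff)
  then have "real m * log 2 p + real (n - m) * log 2 (1 - p) = - (real n * bin_entropy p)"
    unfolding bin_entropy_altdef by (simp add: algebra_simps)
  then show ?thesis
    using power_eq_powr_log[of p m] power_eq_powr_log[of "1 - p" "n - m"] p
    unfolding p_def[symmetric] by (simp add: powr_add[symmetric])
qed

lemma sum_binomial_le_entropy:
  fixes m n :: nat
  assumes "real m / real n \<le> 1 / 2"
  shows "real (\<Sum>i\<le>m. n choose i) \<le> 2 powr (real n * bin_entropy (real m / real n))"
proof (cases "m = 0 \<or> n = 0")
  case True
  have "(\<Sum>i\<le>m. real (0 choose i)) = 1" by (induction m) auto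
  with True show ?thesis by (auto simp: bin_entropy_def)
next
  case False
  then have "0 < m" "m < n" using assms by (auto simp: field_simps)
  define p where "p = real m / real n"
  have "0 \<le> p" "p \<le> 1 / 2" using assms by (simp_all add: p_def)
  then have "p \<le> 1 - p" by linarith
  then have "real (\<Sum>i\<le>m. n choose i) * 2 powr (- (real n * bin_entropy p)) \<le> 1"
    using sum_binomial_mult_le_one[of p m n] binomial_weight_eq_entropy[OF \<open>0 < m\<close> \<open>m < n\<close>]
      \<open>m < n\<close> by (simp add: p_def)
  then show ?thesis by (simp add: p_def powr_minus field_simps)
qed

lemma card_subsets_card_le:
  assumes "finite A"
  shows "card {B. B \<subseteq> A \<and> card B \<le> m} = (\<Sum>i\<le>m. card A choose i)"
proof -
  have "{B. B \<subseteq> A \<and> card B \<le> m} = (\<Union>i\<le>m. {B. B \<subseteq> A \<and> card B = i})"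
    by auto
  also have "card \<dots> = (\<Sum>i\<le>m. card {B. B \<subseteq> A \<and> card B = i})"
    using assms by (intro card_UN_disjoint) (auto intro: finite_subset)
  finally show ?thesis using assms by (simp add: n_subsets)
qed

definition diff_pos :: "bool list \<Rightarrow> bool list \<Rightarrow> nat set" where
  "diff_pos x y = {i. i < length x \<and> x ! i \<noteq> y ! i}"

lemma hamming_dist_eq_card_diff_pos: "hamming_dist x y = card (diff_pos x y)"
  by (simp add: hamming_dist_def diff_pos_def)

lemma diff_pos_rebase:
  assumes "length u = length v"
  shows "diff_pos v y = (diff_pos u y - diff_pos u v) \<union> (diff_pos u v - diff_pos u y)"
  using assms by (auto simp: diff_pos_def)

lemma inj_on_diff_pos: "inj_on (diff_pos u) (hcube (length u))"
proof (rule inj_onI)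
  fix y z assume y: "y \<in> hcube (length u)" and z: "z \<in> hcube (length u)"
    and eq: "diff_pos u y = diff_pos u z"
  show "y = z"
  proof (rule nth_equalityI)
    show "length y = length z" using y z by (simp add: hcube_def)
    fix i assume "i < length y"
    then have "i < length u" using y by (simp add: hcube_def)
    then have "(u ! i \<noteq> y ! i) = (u ! i \<noteq> z ! i)"
      using eq by (auto simp: diff_pos_def set_eq_iff)
    then show "y ! i = z ! i" by blast
  qed
qed

text \<open>Adding the two hypotheses gives 2 |S - D| + |D| \<le> 2 e.\<close>
lemma card_Diff_le_half:
  assumes "finite S" "finite D" "card S \<le> e" "card ((S - D) \<union> (D - S)) \<le> e"
  shows "card (S - D) \<le> e - (card D + 1) div 2"
proof -
  have "card S = card (S \<inter> D) + card (S - D)"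
    using assms(1) by (rule card_Int_Diff)
  moreover have "card ((S - D) \<union> (D - S)) = card (S - D) + card (D - S)"
    using assms(1,2) by (intro card_Un_disjoint) auto
  moreover have "card D = card (S \<inter> D) + card (D - S)"
    using card_Int_Diff[OF assms(2), of S] by (simp add: Int_commute)
  ultimately show ?thesis using assms(3,4) by linarith
qed

lemma card_ball_inter_le:
  assumes "length u = n" "length v = n"
  shows "card (hball n eps u \<inter> hball n eps v)
         \<le> 2 ^ hamming_dist u v * (\<Sum>i\<le>eps - (hamming_dist u v + 1) div 2. n choose i)"
proof -
  define D where "D = diff_pos u v"
  define small where "small = {B. B \<subseteq> {..<n} \<and> card B \<le> eps - (card D + 1) div 2}"
  define split where "split y = (diff_pos u y \<inter> D, diff_pos u y - D)" for y
  let ?I = "hball n eps u \<inter> hball n eps v"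
  have "finite D" by (simp add: D_def diff_pos_def)
  have "finite small" unfolding small_def by (rule finite_subset[of _ "Pow {..<n}"]) auto
  have "?I \<subseteq> hcube (length u)" using assms by (auto simp: hball_def)
  then have inj: "inj_on (diff_pos u) ?I" by (rule inj_on_subset[OF inj_on_diff_pos])
  have "inj_on split ?I"
  proof (rule inj_onI)
    fix y z assume "y \<in> ?I" "z \<in> ?I" "split y = split z"
    moreover from \<open>split y = split z\<close> have "diff_pos u y = diff_pos u z"
      unfolding split_def by (metis Int_Diff_Un prod.inject)
    ultimately show "y = z" using inj by (auto dest: inj_onD)
  qed
  moreover have "split y \<in> Pow D \<times> small" if y: "y \<in> ?I" for y
  proof -
    have "card (diff_pos u y) \<le> eps" "card (diff_pos v y) \<le> eps"
      using y by (auto simp: hball_def hamming_dist_eq_card_diff_pos)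
    then have "card (diff_pos u y - D) \<le> eps - (card D + 1) div 2"
      using diff_pos_rebase[of u v y] assms \<open>finite D\<close>
      by (intro card_Diff_le_half) (auto simp: D_def diff_pos_def)
    moreover have "diff_pos u y - D \<subseteq> {..<n}" using assms by (auto simp: diff_pos_def)
    ultimately show ?thesis by (simp add: split_def small_def)
  qed
  ultimately have "card ?I \<le> card (Pow D \<times> small)"
    using \<open>finite D\<close> \<open>finite small\<close> by (intro card_inj_on_le image_subsetI) auto
  also have "\<dots> = 2 ^ card D * (\<Sum>i\<le>eps - (card D + 1) div 2. n choose i)"
    using \<open>finite D\<close> by (simp add: small_def card_cartesian_product card_Pow card_subsets_card_le)
  finally show ?thesis by (simp add: D_def hamming_dist_eq_card_diff_pos)
qed

theorem lemma4p13:
  fixes n eps d :: nat and u v :: "bool list"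
  assumes "length u = n" and "length v = n"
    and "d = hamming_dist u v" and "d \<le> 2 * eps"
    and "real eps / real n < 1 / 2"
  shows "ball_inter n eps u v
           \<le> 2 powr (real n * (bin_entropy ((real eps - real ((d + 1) div 2)) / real n) - 1) + real d)
         \<and> 2 powr (real n * (bin_entropy ((real eps - real ((d + 1) div 2)) / real n) - 1) + real d)
           \<le> 2 powr (real n * (bin_entropy (real eps / real n) - 1) + real d)
             * ((real eps / real n) / (1 - real eps / real n)) ^ ((d + 1) div 2)"
proof -
  define c where "c = (d + 1) div 2"
  define r where "r = (real eps / real n) / (1 - real eps / real n)"
  define H where "H x = 2 powr (real n * bin_entropy (x / real n))" for x
  have "c \<le> eps" using assms(4) by (simp add: c_def)
  then have eps_minus_c: "real eps - real c = real (eps - c)" by (simp add: of_nat_diff)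
  have exponent: "2 powr (real n * (bin_entropy (x / real n) - 1) + real d) = H x * 2 ^ d / 2 ^ n" for x
    by (simp add: H_def powr_add powr_diff powr_realpow algebra_simps)
  have "real (eps - c) / real n \<le> 1 / 2"
    using assms(5) by (cases "n = 0") (auto simp: field_simps)
  then have tail: "real (\<Sum>i\<le>eps - c. n choose i) \<le> H (eps - c)"
    unfolding H_def by (rule sum_binomial_le_entropy)
  have "card (hball n eps u \<inter> hball n eps v) \<le> 2 ^ d * (\<Sum>i\<le>eps - c. n choose i)"
    using card_ball_inter_le[OF assms(1,2), of eps] unfolding assms(3)[symmetric] c_def .
  then have "real (card (hball n eps u \<inter> hball n eps v)) \<le> 2 ^ d * real (\<Sum>i\<le>eps - c. n choose i)"
    by (metis of_nat_le_iff of_nat_mult of_nat_numeral of_nat_power)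
  also have "\<dots> \<le> 2 ^ d * H (eps - c)"
    using tail by (rule mult_left_mono) simp
  finally have "ball_inter n eps u v \<le> H (eps - c) * 2 ^ d / 2 ^ n"
    unfolding ball_inter_def by (simp add: divide_right_mono mult.commute)
  moreover have "H (eps - c) \<le> H eps * r ^ c"
  proof (cases "c = 0")
    case False
    then have "d \<noteq> 0" by (simp add: c_def)
    then have "0 < n" using assms(1,3) by (auto simp: hamming_dist_def)
    then show ?thesis
      using powr_entropy_shift_le[OF \<open>c \<le> eps\<close> _ assms(5)] unfolding H_def r_def eps_minus_c by simp
  qed simp
  then have "H (eps - c) * 2 ^ d / 2 ^ n \<le> H eps * 2 ^ d / 2 ^ n * r ^ c"
    by (simp add: divide_right_mono mult_right_mono mult_ac)
  ultimately show ?thesis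
    unfolding eps_minus_c exponent c_def[symmetric] r_def[symmetric] by simp
qed

end
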